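(* Let $\omega\in(0,\pi/2]$ and let $K$ be a cap with rotation angle $\omega$. The following are equivalent: (1) $\mathcal{N}(K)\subseteq K$; (2) $\mathcal{N}(K)\subseteq K\setminus\delta K$; (3) for every $t\in[0,\omega]$, either $\mathbf{x}_K(t)\notin F_\omega^\circ$ or $\mathbf{x}_K(t)\in K$; (4) the set $K\setminus\mathcal{N}(K)$ is connected.
   Context: For $t\in\mathbb{R}$ let $u_t=(\cos t,\sin t)$, $v_t=(-\sin t,\cos t)$. For nonempty compact $K$, $p_K(t)=\max_{p\in K}p\cdot u_t$; $H(t,h)=\{p:p\cdot u_t\le h\}$; the edge $e_K(t)=\{p\in K: p\cdot u_t=p_K(t)\}$. With $J_\omega=[0,\omega]\cup[\pi/2,\pi/2+\omega]$, a cap with rotation angle $\omega$ is a nonempty compact convex $K\subset\mathbb{R}^2$ with $p_K(\omega)=p_K(\pi/2)=1$, $p_K(\pi+\omega)=p_K(3\pi/2)=0$, which is an intersection of closed half-planes $H(t,h)$ with $t\in J_\omega\cup\{\pi+\omega,3\pi/2\}$. Its upper boundary is $\delta K=\bigcup_{t\in[0,\omega+\pi/2]}e_K(t)$. Fan $F_\omega=\{(x,y):y\ge0,\ x\cos\omega+y\sin\omega\ge0\}$, with interior $F_\omega^\circ$. For $t\in[0,\omega]$: $\mathbf{x}_K(t)=(p_K(t)-1)u_t+(p_K(t+\pi/2)-1)v_t$ and $Q_K^-(t)=\{p:p\cdot u_t<p_K(t)-1,\ p\cdot v_t<p_K(t+\pi/2)-1\}$. Niche $\mathcal{N}(K)=F_\omega\cap\bigcup_{0\le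 t\le\omega}Q_K^-(t)$. *)

theory Defs
  imports "HOL-Analysis.Analysis"
begin

definition uu :: "real \<Rightarrow> real \<times> real" where
  "uu t = (cos t, sin t)"

definition vv :: "real \<Rightarrow> real \<times> real" where
  "vv t = (- sin t, cos t)"

text \<open>Support function p_K(t) = max over K of p \<bullet> u_t (for nonempty compact K the Sup is a max).\<close>
definition supp :: "(real \<times> real) set \<Rightarrow> real \<Rightarrow> real" where
  "supp K t = Sup ((\<lambda>p. p \<bullet> uu t) ` K)"

definition halfplane :: "real \<Rightarrow> real \<Rightarrow> (real \<times> real) set" where
  "halfplane t h = {p. p \<bullet> uu t \<le> h}"

definition edge :: "(real \<times> real) set \<Rightarrow> real \<Rightarrow> (real \<times> real) set" where
  "edge K t = {p \<in> K. p \<bullet> uu t = supp K t}"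

definition Jset :: "real \<Rightarrow> real set" where
  "Jset \<omega> = {0..\<omega>} \<union> {pi/2..pi/2+\<omega>}"

definition is_cap :: "real \<Rightarrow> (real \<times> real) set \<Rightarrow> bool" where
  "is_cap \<omega> K \<longleftrightarrow> K \<noteq> {} \<and> compact K \<and> convex K \<and>
     supp K \<omega> = 1 \<and> supp K (pi/2) = 1 \<and> supp K (pi + \<omega>) = 0 \<and> supp K (3*pi/2) = 0 \<and>
     (\<exists>S. S \<subseteq> {(t, h). t \<in> Jset \<omega> \<union> {pi + \<omega>, 3*pi/2}} \<and>
          K = (\<Inter>(t, h)\<in>S. halfplane t h))"

definition upper_boundary :: "real \<Rightarrow> (real \<times> real) set \<Rightarrow> (real \<times> real) set" where
  "upper_boundary \<omega> K = (\<Union>t\<in>{0..\<omega> + pi/2}. edge K t)"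

definition fan :: "real \<Rightarrow> (real \<times> real) set" where
  "fan \<omega> = {(x, y). y \<ge> 0 \<and> x * cos \<omega> + y * sin \<omega> \<ge> 0}"

definition xK :: "(real \<times> real) set \<Rightarrow> real \<Rightarrow> real \<times> real" where
  "xK K t = (supp K t - 1) *\<^sub>R uu t + (supp K (t + pi/2) - 1) *\<^sub>R vv t"

definition Qminus :: "(real \<times> real) set \<Rightarrow> real \<Rightarrow> (real \<times> real) set" where
  "Qminus K t = {p. p \<bullet> uu t < supp K t - 1 \<and> p \<bullet> vv t < supp K (t + pi/2) - 1}"

definition niche :: "real \<Rightarrow> (real \<times> real) set \<Rightarrow> (real \<times> real) set" where
  "niche \<omega> K = fan \<omega> \<inter> (\<Union>t\<in>{0..\<omega>}. Qminus K t)"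

end

theory Submission
  imports Defs
begin

text \<open>
  Write \<open>x = x_K(t)\<close>. A point \<open>p \<in> Q_K^-(t)\<close> differs from the corner \<open>x\<close> by a vector
  with positive coordinates in the frame \<open>(u_t, v_t)\<close>, hence \<open>p \<bullet> u_s < x \<bullet> u_s\<close> for every
  direction \<open>s\<close> in the window \<open>[t, t + \<pi>/2]\<close>; if \<open>p\<close> is in the fan, \<open>x\<close> is in the open fan.
  Constraints of the cap with direction outside the window hold automatically for fan points
  below-left of such a corner: writing \<open>u_s\<close> as a combination of \<open>u_t\<close> and \<open>u_{\<pi>/2}\<close> (or of
  \<open>v_t\<close> and \<open>u_\<omega>\<close>), the deficit of 1 below the support line at \<open>t\<close> pays for the strip
  bound \<open>y \<le> 1\<close> (or \<open>p \<bullet> u_\<omega> \<le> 1\<close>). Hence the quadrant lies in \<open>K\<close> as soon as its corner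
  does, which is (3) \<open>\<Rightarrow>\<close> (1); and (1) \<open>\<Rightarrow>\<close> (3) because the corner is a limit of niche points.

  A niche point can be pushed a little in every direction \<open>u_s\<close>, \<open>s \<in> [0, \<omega> + \<pi>/2]\<close>,
  without leaving the niche. So a niche inside \<open>K\<close> avoids the edges (2), and misses the highest
  point of every vertical chord of \<open>K\<close>; being also closed and upward closed in \<open>K\<close>, the set
  \<open>K - \<N>(K)\<close> is then connected (4). Conversely, if a corner \<open>x\<close> in the open fan is not in
  \<open>K\<close>, a constraint of the cap in the window separates it from \<open>K\<close>, and the half-planes
  \<open>p \<bullet> u_t \<ge> x \<bullet> u_t\<close> and \<open>p \<bullet> v_t \<ge> x \<bullet> v_t\<close> cut \<open>K - \<N>(K)\<close> into two disjoint closed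
  pieces, containing the maximisers of \<open>u_0\<close> and of \<open>u_{\<omega>+\<pi>/2}\<close> respectively.
\<close>

section \<open>Rotated frames\<close>

lemma inner_uu: "p \<bullet> uu t = fst p * cos t + snd p * sin t"
  by (cases p) (simp add: uu_def inner_prod_def)

lemma vv_eq_uu: "vv t = uu (t + pi/2)"
  by (simp add: vv_def uu_def cos_add sin_add)

lemma uu_pi2: "uu (pi/2) = (0, 1)"
  by (simp add: uu_def)

lemma uu_pi_add: "uu (pi + t) = - uu t"
  by (simp add: uu_def)

lemma uu_3pi2: "uu (3*pi/2) = - uu (pi/2)"
  using uu_pi_add[of "pi/2"] by (simp add: field_simps)

lemma uu_rotate: "uu s = cos (s - t) *\<^sub>R uu t + sin (s - t) *\<^sub>R vv t"
  using cos_add[of "s - t" t] sin_add[of "s - t" t]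
  by (simp add: uu_def vv_def prod_eq_iff algebra_simps)

lemma sin_diff_uu_cycle:
  "sin (c - b) *\<^sub>R uu a + sin (a - c) *\<^sub>R uu b + sin (b - a) *\<^sub>R uu c = 0"
  by (simp add: uu_def prod_eq_iff sin_diff cos_diff algebra_simps)

lemma inner_uu_rotate: "z \<bullet> uu s = (z \<bullet> uu t) * cos (s - t) + (z \<bullet> vv t) * sin (s - t)"
  by (subst uu_rotate[of s t]) (simp add: inner_add_right)

lemma inner_uu_uu: "uu s \<bullet> uu t = cos (s - t)"
  by (simp add: uu_def inner_prod_def cos_diff)

lemma inner_uu_vv: "uu s \<bullet> vv t = sin (s - t)"
  by (simp add: uu_def vv_def inner_prod_def sin_diff)

lemma norm_uu: "norm (uu t) = 1"
  by (simp add: norm_eq_sqrt_inner inner_uu_uu)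

lemma uu_nonzero: "uu t \<noteq> 0"
  using norm_uu[of t] by auto

lemma frame_orthonormal: "uu t \<bullet> uu t = 1" "vv t \<bullet> vv t = 1" "uu t \<bullet> vv t = 0" "vv t \<bullet> uu t = 0"
  by (simp_all add: inner_uu_uu inner_uu_vv vv_eq_uu)

lemma inner_uu_nonneg_between:
  assumes "0 \<le> z \<bullet> uu t" "0 \<le> z \<bullet> vv t" "t \<le> s" "s \<le> t + pi/2"
  shows "0 \<le> z \<bullet> uu s"
proof -
  have "0 \<le> cos (s - t)" "0 \<le> sin (s - t)"
    using assms by (auto intro!: cos_ge_zero sin_ge_zero)
  then show ?thesis
    using assms by (simp add: inner_uu_rotate[of z s t])
qed

lemma inner_uu_pos_between:
  assumes "0 < z \<bullet> uu t" "0 < z \<bullet> vv t" "t \<le> s" "s \<le> t + pi/2"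
  shows "0 < z \<bullet> uu s"
proof -
  have cos_nonneg: "0 \<le> cos (s - t)" and sin_nonneg: "0 \<le> sin (s - t)"
    using assms by (auto intro!: cos_ge_zero sin_ge_zero)
  have "cos (s - t) \<noteq> 0 \<or> sin (s - t) \<noteq> 0"
    by (metis sin_cos_squared_add zero_power2 add_0 zero_neq_one)
  then have "0 < (z \<bullet> uu t) * cos (s - t) \<or> 0 < (z \<bullet> vv t) * sin (s - t)"
    using assms cos_nonneg sin_nonneg by auto
  moreover have "0 \<le> (z \<bullet> uu t) * cos (s - t)" "0 \<le> (z \<bullet> vv t) * sin (s - t)"
    using assms cos_nonneg sin_nonneg by auto
  ultimately show ?thesis
    unfolding inner_uu_rotate[of z s t] by linarith
qed

section \<open>Support functions\<close>

lemma inner_le_supp: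
  assumes "compact K" "p \<in> K"
  shows "p \<bullet> uu t \<le> supp K t"
proof -
  have "bounded ((\<lambda>p. p \<bullet> uu t) ` K)"
    using assms by (intro compact_imp_bounded compact_continuous_image continuous_intros)
  then show ?thesis
    unfolding supp_def using assms by (intro cSup_upper bounded_imp_bdd_above) auto
qed

lemma supp_attained:
  assumes "compact K" "K \<noteq> {}"
  obtains k where "k \<in> K" "k \<bullet> uu t = supp K t"
proof -
  have "compact ((\<lambda>p. p \<bullet> uu t) ` K)"
    using assms by (intro compact_continuous_image continuous_intros)
  then obtain k where "k \<in> K" "\<forall>p\<in>K. p \<bullet> uu t \<le> k \<bullet> uu t"
    using compact_attains_sup[of "(\<lambda>p. p \<bullet> uu t) ` K"] assms by auto
  moreover from this have "supp K t = k \<bullet> uu t"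
    unfolding supp_def by (intro cSup_eq_maximum) auto
  ultimately show ?thesis using that by simp
qed

lemma supp_le_iff:
  assumes "compact K" "K \<noteq> {}"
  shows "supp K t \<le> h \<longleftrightarrow> (\<forall>k\<in>K. k \<bullet> uu t \<le> h)"
  using inner_le_supp[OF assms(1)] supp_attained[OF assms] by (metis order_trans)

lemma inner_le_supp_from_deficit:
  assumes "compact K" "K \<noteq> {}" and K_below: "\<forall>k\<in>K. k \<bullet> uu b \<le> 1" and p_above: "0 \<le> p \<bullet> uu b"
    and comb: "\<mu> *\<^sub>R uu s = \<alpha> *\<^sub>R uu t - \<beta> *\<^sub>R uu b" and "0 < \<mu>" "0 \<le> \<beta>" "\<beta> \<le> \<alpha>"
    and deficit: "p \<bullet> uu t \<le> supp K t - 1"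
  shows "p \<bullet> uu s \<le> supp K s"
proof -
  have expand: "\<mu> * (z \<bullet> uu s) = \<alpha> * (z \<bullet> uu t) - \<beta> * (z \<bullet> uu b)" for z
    using arg_cong[OF comb, of "inner z"] by (simp add: inner_diff_right)
  obtain k where k: "k \<in> K" "k \<bullet> uu t = supp K t"
    using supp_attained assms(1,2) by blast
  have "\<alpha> * (p \<bullet> uu t) \<le> \<alpha> * (supp K t - 1)"
    using deficit assms by (intro mult_left_mono) auto
  moreover have "0 \<le> \<beta> * (p \<bullet> uu b)" "\<beta> * (k \<bullet> uu b) \<le> \<beta>"
    using p_above K_below k(1) \<open>0 \<le> \<beta>\<close> by (auto simp: mult_left_le)
  moreover have "\<mu> * (k \<bullet> uu s) \<le> \<mu> * supp K s"
    using inner_le_supp[OF assms(1) k(1)] \<open>0 < \<mu>\<close> by simp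
  ultimately have "\<mu> * (p \<bullet> uu s) \<le> \<mu> * supp K s"
    using expand[of p] expand[of k] k(2) \<open>\<beta> \<le> \<alpha>\<close> by (simp add: algebra_simps)
  then show ?thesis
    using \<open>0 < \<mu>\<close> by simp
qed

lemma supp_minus_one_le_at_maximizer:
  assumes "compact K" "K \<noteq> {}" "k \<in> K" "k \<bullet> uu a = supp K a"
    and comb: "uu s = c *\<^sub>R uu a + d *\<^sub>R uu b" and "0 \<le> c" "0 \<le> d" "d \<le> 1"
    and K_strip: "\<forall>p\<in>K. 0 \<le> p \<bullet> uu b \<and> p \<bullet> uu b \<le> 1"
  shows "supp K s - 1 \<le> k \<bullet> uu s"
proof -
  have expand: "z \<bullet> uu s = c * (z \<bullet> uu a) + d * (z \<bullet> uu b)" for z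
    by (simp add: comb inner_add_right)
  have "p \<bullet> uu s \<le> c * supp K a + d" if "p \<in> K" for p
  proof -
    have "c * (p \<bullet> uu a) \<le> c * supp K a"
      using inner_le_supp[OF assms(1) that] \<open>0 \<le> c\<close> by (intro mult_left_mono)
    moreover have "d * (p \<bullet> uu b) \<le> d"
      using K_strip that \<open>0 \<le> d\<close> by (simp add: mult_left_le)
    ultimately show ?thesis
      by (simp add: expand)
  qed
  then have "supp K s \<le> c * supp K a + d"
    using supp_le_iff[OF assms(1,2)] by blast
  moreover have "0 \<le> d * (k \<bullet> uu b)"
    using K_strip assms(3) \<open>0 \<le> d\<close> by simp
  ultimately show ?thesis
    using expand[of k] assms(4) \<open>d \<le> 1\<close> by simp
qed

section \<open>Fans, corner quadrants and niches\<close>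

lemma mem_fan_iff: "p \<in> fan \<omega> \<longleftrightarrow> 0 \<le> snd p \<and> 0 \<le> p \<bullet> uu \<omega>"
  by (cases p) (simp add: fan_def inner_uu)

lemma interior_fan: "interior (fan \<omega>) = {p. 0 < snd p \<and> 0 < p \<bullet> uu \<omega>}"
proof -
  have "fan \<omega> = {p. uu (pi/2) \<bullet> p \<ge> 0} \<inter> {p. uu \<omega> \<bullet> p \<ge> 0}"
    by (auto simp: mem_fan_iff inner_commute uu_pi2)
  then have "interior (fan \<omega>) = {p. uu (pi/2) \<bullet> p > 0} \<inter> {p. uu \<omega> \<bullet> p > 0}"
    by (simp only: interior_Int interior_halfspace_ge uu_nonzero not_False_eq_True)
  then show ?thesis
    by (auto simp: inner_commute uu_pi2)
qed

lemma fan_add_uu: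
  assumes "p \<in> fan \<omega>" "0 \<le> c" "0 \<le> s" "s \<le> pi" "\<omega> - pi/2 \<le> s" "s \<le> \<omega> + pi/2"
  shows "p + c *\<^sub>R uu s \<in> fan \<omega>"
proof -
  have "0 \<le> sin s" "0 \<le> cos (s - \<omega>)"
    using assms by (auto intro!: sin_ge_zero cos_ge_zero)
  then show ?thesis
    using assms by (simp add: mem_fan_iff inner_add_left inner_uu_uu) (simp add: uu_def)
qed

lemma inner_xK_uu: "xK K t \<bullet> uu t = supp K t - 1"
  and inner_xK_vv: "xK K t \<bullet> vv t = supp K (t + pi/2) - 1"
  by (simp_all add: xK_def inner_add_left frame_orthonormal)

lemma mem_Qminus_iff: "p \<in> Qminus K t \<longleftrightarrow> 0 < (xK K t - p) \<bullet> uu t \<and> 0 < (xK K t - p) \<bullet> vv t"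
  by (simp add: Qminus_def inner_diff_left inner_xK_uu inner_xK_vv)

lemma open_Qminus: "open (Qminus K t)"
  unfolding Qminus_def by (intro open_Collect_conj open_Collect_less continuous_intros)

lemma Qminus_shift_down:
  assumes "p + c *\<^sub>R uu s \<in> Qminus K t" "0 \<le> c" "t \<le> s" "s \<le> t + pi/2"
  shows "p \<in> Qminus K t"
proof -
  have "0 \<le> cos (s - t)" "0 \<le> sin (s - t)"
    using assms by (auto intro!: cos_ge_zero sin_ge_zero)
  then have "0 \<le> c * cos (s - t)" "0 \<le> c * sin (s - t)"
    using \<open>0 \<le> c\<close> by simp_all
  moreover have "xK K t - p = (xK K t - (p + c *\<^sub>R uu s)) + c *\<^sub>R uu s"
    by simp
  ultimately show ?thesis
    using assms(1) unfolding mem_Qminus_iff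
    by (metis add_pos_nonneg inner_add_left inner_scaleR_left inner_uu_uu inner_uu_vv)
qed

lemma xK_in_closure_Qminus: "xK K t \<in> closure (Qminus K t)"
  unfolding closure_approachable
proof (intro allI impI)
  fix d :: real
  assume "0 < d"
  define y where "y = xK K t - (d/3) *\<^sub>R (uu t + vv t)"
  have "y \<in> Qminus K t"
    using \<open>0 < d\<close> unfolding mem_Qminus_iff y_def by (simp add: inner_add_left frame_orthonormal)
  moreover have "norm (uu t + vv t) \<le> 2"
    using norm_triangle_ineq[of "uu t" "vv t"] by (simp add: vv_eq_uu norm_uu)
  then have "dist y (xK K t) < d"
    using \<open>0 < d\<close> by (simp add: y_def dist_norm norm_uu)
  ultimately show "\<exists>y\<in>Qminus K t. dist y (xK K t) < d"
    by blast
qed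

lemma xK_in_interior_fan:
  assumes "p \<in> fan \<omega>" "p \<in> Qminus K t" "0 \<le> t" "t \<le> \<omega>" "\<omega> \<le> pi/2"
  shows "xK K t \<in> interior (fan \<omega>)"
proof -
  have "0 < (xK K t - p) \<bullet> uu s" if "t \<le> s" "s \<le> t + pi/2" for s
    using assms(2) that mem_Qminus_iff inner_uu_pos_between by blast
  from this[of "pi/2"] this[of \<omega>] have "snd p < snd (xK K t)" "p \<bullet> uu \<omega> < xK K t \<bullet> uu \<omega>"
    using assms by (simp_all add: inner_diff_left inner_uu algebra_simps)
  then show ?thesis
    using assms(1) by (simp add: interior_fan mem_fan_iff)
qed

lemma corners_if_niche_subset:
  assumes "closed K" "niche \<omega> K \<subseteq> K"
  shows "\<forall>t\<in>{0..\<omega>}. xK K t \<notin> interior (fan \<omega>) \<or> xK K t \<in> K"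
proof
  fix t
  assume "t \<in> {0..\<omega>}"
  have "interior (fan \<omega>) \<inter> closure (Qminus K t) \<subseteq> closure (interior (fan \<omega>) \<inter> Qminus K t)"
    by (rule open_Int_closure_subset) simp
  also have "\<dots> \<subseteq> closure (niche \<omega> K)"
    using \<open>t \<in> {0..\<omega>}\<close> interior_subset by (intro closure_mono) (auto simp: niche_def)
  also have "\<dots> \<subseteq> K"
    using assms by (intro closure_minimal)
  finally show "xK K t \<notin> interior (fan \<omega>) \<or> xK K t \<in> K"
    using xK_in_closure_Qminus by blast
qed

lemma niche_add_uu:
  assumes "p \<in> niche \<omega> K" "0 \<le> \<omega>" "\<omega> \<le> pi/2" "0 \<le> s" "s \<le> \<omega> + pi/2"
  obtains \<epsilon> where "0 < \<epsilon>" "p + \<epsilon> *\<^sub>R uu s \<in> niche \<omega> K"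
proof -
  obtain t where t: "t \<in> {0..\<omega>}" "p \<in> Qminus K t" and "p \<in> fan \<omega>"
    using assms(1) by (auto simp: niche_def)
  obtain r where "0 < r" "ball p r \<subseteq> Qminus K t"
    using open_Qminus open_contains_ball t(2) by blast
  then have "p + (r/2) *\<^sub>R uu s \<in> Qminus K t"
    by (auto simp: dist_norm norm_uu)
  moreover have "p + (r/2) *\<^sub>R uu s \<in> fan \<omega>"
    using \<open>p \<in> fan \<omega>\<close> \<open>0 < r\<close> assms by (intro fan_add_uu) auto
  ultimately have "p + (r/2) *\<^sub>R uu s \<in> niche \<omega> K"
    using t(1) unfolding niche_def by blast
  then show ?thesis
    using that[of "r/2"] \<open>0 < r\<close> by simp
qed

lemma niche_disjoint_upper_boundary:
  assumes "compact K" "niche \<omega> K \<subseteq> K" "0 \<le> \<omega>" "\<omega> \<le> pi/2"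
  shows "niche \<omega> K \<inter> upper_boundary \<omega> K = {}"
proof (rule ccontr)
  assume "niche \<omega> K \<inter> upper_boundary \<omega> K \<noteq> {}"
  then obtain p s where p: "p \<in> niche \<omega> K" and s: "0 \<le> s" "s \<le> \<omega> + pi/2" "p \<bullet> uu s = supp K s"
    by (auto simp: upper_boundary_def edge_def)
  obtain \<epsilon> where "0 < \<epsilon>" "p + \<epsilon> *\<^sub>R uu s \<in> K"
    using niche_add_uu[OF p assms(3,4) s(1,2)] assms(2) by blast
  then have "(p + \<epsilon> *\<^sub>R uu s) \<bullet> uu s \<le> supp K s"
    using inner_le_supp[OF assms(1)] by blast
  with s(3) \<open>0 < \<epsilon>\<close> show False
    by (simp add: inner_add_left inner_uu_uu)
qed

section \<open>A connectivity criterion for subsets of a convex body\<close>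

lemma closed_segment_subset_if_upward_closed:
  fixes K M :: "(real \<times> real) set"
  assumes "convex K" "M \<subseteq> K"
    and up: "\<And>q p. q \<in> M \<Longrightarrow> p \<in> K \<Longrightarrow> fst p = fst q \<Longrightarrow> snd q \<le> snd p \<Longrightarrow> p \<in> M"
    and "q1 \<in> M" "q2 \<in> M" "fst q1 = fst q2"
  shows "closed_segment q1 q2 \<subseteq> M"
proof -
  have ordered: "closed_segment a b \<subseteq> M"
    if "a \<in> M" "b \<in> M" "fst a = fst b" "snd a \<le> snd b" for a b
  proof
    fix z
    assume z: "z \<in> closed_segment a b"
    then have "z \<in> K"
      using assms(1,2) that(1,2) convex_contains_segment by blast
    moreover obtain u where u: "0 \<le> u" "z = (1 - u) *\<^sub>R a + u *\<^sub>R b"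
      using z by (auto simp: closed_segment_def)
    have "fst z = fst a" "snd z = snd a + u * (snd b - snd a)"
      using that(3) by (simp_all add: u(2) algebra_simps)
    then have "fst z = fst a" "snd a \<le> snd z"
      using u(1) that(4) by simp_all
    ultimately show "z \<in> M"
      using up[OF \<open>a \<in> M\<close>] by blast
  qed
  show ?thesis
  proof (cases "snd q1 \<le> snd q2")
    case True
    then show ?thesis
      using assms(4-6) by (intro ordered)
  next
    case False
    then have "closed_segment q2 q1 \<subseteq> M"
      using assms(4-6) by (intro ordered) auto
    then show ?thesis
      by (simp only: closed_segment_commute)
  qed
qed

lemma compact_points_below:
  fixes K C :: "(real \<times> real) set"
  assumes "compact K" "compact C"
  shows "compact {p \<in> K. \<exists>q\<in>C. fst q = fst p \<and> snd p \<le> snd q}"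
proof -
  let ?below = "{pq :: (real \<times> real) \<times> (real \<times> real).
    fst (snd pq) = fst (fst pq) \<and> snd (fst pq) \<le> snd (snd pq)}"
  have "closed ?below"
    by (intro closed_Collect_conj closed_Collect_eq closed_Collect_le continuous_intros)
  then have "compact (fst ` ((K \<times> C) \<inter> ?below))"
    using assms by (intro compact_continuous_image continuous_intros compact_Int_closed compact_Times)
  moreover have "fst ` ((K \<times> C) \<inter> ?below) = {p \<in> K. \<exists>q\<in>C. fst q = fst p \<and> snd p \<le> snd q}"
    by force
  ultimately show ?thesis
    by simp
qed

lemma connected_if_upward_closed:
  fixes K M :: "(real \<times> real) set"
  assumes "compact K" "convex K" "closed M" "M \<subseteq> K"
    and above: "\<And>p. p \<in> K \<Longrightarrow> \<exists>q\<in>M. fst q = fst p \<and> snd p \<le> snd q"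
    and up: "\<And>q p. q \<in> M \<Longrightarrow> p \<in> K \<Longrightarrow> fst p = fst q \<Longrightarrow> snd q \<le> snd p \<Longrightarrow> p \<in> M"
  shows "connected M"
proof (rule ccontr)
  assume "\<not> connected M"
  then obtain A B where AB: "closed A" "closed B" "M \<subseteq> A \<union> B" "A \<inter> B \<inter> M = {}"
    "A \<inter> M \<noteq> {}" "B \<inter> M \<noteq> {}"
    unfolding connected_closed by blast
  \<comment> \<open>The parts of \<open>K\<close> lying below \<open>A \<inter> M\<close> and below \<open>B \<inter> M\<close> would disconnect \<open>K\<close>.\<close>
  define shadow where "shadow C = {p \<in> K. \<exists>q\<in>C. fst q = fst p \<and> snd p \<le> snd q}" for C
  have "compact M"
    using assms(1,3,4) by (metis compact_Int_closed inf.absorb_iff2)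
  then have "closed (shadow (A \<inter> M))" "closed (shadow (B \<inter> M))"
    unfolding shadow_def using assms(1) AB(1,2)
    by (simp_all add: compact_imp_closed compact_points_below closed_Int_compact)
  moreover have "K \<subseteq> shadow (A \<inter> M) \<union> shadow (B \<inter> M)"
    using above AB(3) by (fastforce simp: shadow_def)
  moreover have "shadow (A \<inter> M) \<inter> shadow (B \<inter> M) \<inter> K = {}"
  proof (rule ccontr)
    assume "shadow (A \<inter> M) \<inter> shadow (B \<inter> M) \<inter> K \<noteq> {}"
    then obtain p where "p \<in> shadow (A \<inter> M)" "p \<in> shadow (B \<inter> M)"
      by blast
    then obtain q1 q2 where q: "q1 \<in> A \<inter> M" "q2 \<in> B \<inter> M" "fst q1 = fst p" "fst q2 = fst p"
      unfolding shadow_def by blast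
    then have "closed_segment q1 q2 \<subseteq> M"
      by (intro closed_segment_subset_if_upward_closed[OF assms(2,4) up]) auto
    then show False
      using connected_segment[of q1 q2] q AB(1-4) unfolding connected_closed by blast
  qed
  moreover have "shadow (A \<inter> M) \<inter> K \<noteq> {}" "shadow (B \<inter> M) \<inter> K \<noteq> {}"
    using AB(5,6) assms(4) by (auto simp: shadow_def)
  ultimately show False
    using convex_connected[OF \<open>convex K\<close>] connected_closed[of K]
    by (metis (no_types, lifting))
qed

section \<open>Caps\<close>

definition cap_directions :: "real \<Rightarrow> real set" where
  "cap_directions \<omega> = Jset \<omega> \<union> {pi + \<omega>, 3*pi/2}"

locale cap =
  fixes \<omega> :: real and K :: "(real \<times> real) set"
  assumes omega_pos: "0 < \<omega>" and omega_le: "\<omega> \<le> pi/2" and is_cap: "is_cap \<omega> K"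
begin

lemma compact: "compact K" and nonempty: "K \<noteq> {}" and convex: "convex K"
  and supp_omega: "supp K \<omega> = 1" and supp_pi2: "supp K (pi/2) = 1"
  and supp_pi_omega: "supp K (pi + \<omega>) = 0" and supp_3pi2: "supp K (3*pi/2) = 0"
  using is_cap unfolding is_cap_def by blast+

lemma eq_Inter_supporting_halfplanes: "K = {p. \<forall>s\<in>cap_directions \<omega>. p \<bullet> uu s \<le> supp K s}"
proof
  show "K \<subseteq> {p. \<forall>s\<in>cap_directions \<omega>. p \<bullet> uu s \<le> supp K s}"
    using inner_le_supp[OF compact] by blast
next
  obtain S where S: "S \<subseteq> {(t, h). t \<in> cap_directions \<omega>}" "K = (\<Inter>(t, h)\<in>S. halfplane t h)"
    using is_cap unfolding is_cap_def cap_directions_def by blast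
  have "supp K s \<le> h" if "(s, h) \<in> S" for s h
    using that supp_le_iff[OF compact nonempty] unfolding S(2) halfplane_def by blast
  then show "{p. \<forall>s\<in>cap_directions \<omega>. p \<bullet> uu s \<le> supp K s} \<subseteq> K"
    using S unfolding halfplane_def by fastforce
qed

lemma inner_uu_pi2_bounds: "p \<in> K \<Longrightarrow> 0 \<le> p \<bullet> uu (pi/2) \<and> p \<bullet> uu (pi/2) \<le> 1"
  and inner_uu_omega_bounds: "p \<in> K \<Longrightarrow> 0 \<le> p \<bullet> uu \<omega> \<and> p \<bullet> uu \<omega> \<le> 1"
proof -
  show "p \<in> K \<Longrightarrow> 0 \<le> p \<bullet> uu (pi/2) \<and> p \<bullet> uu (pi/2) \<le> 1"
    using inner_le_supp[OF compact, of p "3*pi/2"] inner_le_supp[OF compact, of p "pi/2"]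
    by (simp add: supp_3pi2 supp_pi2 uu_3pi2)
  show "p \<in> K \<Longrightarrow> 0 \<le> p \<bullet> uu \<omega> \<and> p \<bullet> uu \<omega> \<le> 1"
    using inner_le_supp[OF compact, of p "pi + \<omega>"] inner_le_supp[OF compact, of p \<omega>]
    by (simp add: supp_pi_omega supp_omega uu_pi_add)
qed

lemma subset_fan: "K \<subseteq> fan \<omega>"
  using inner_uu_pi2_bounds inner_uu_omega_bounds by (auto simp: mem_fan_iff uu_pi2)

lemma inner_le_supp_before_window:
  assumes "p \<in> fan \<omega>" "0 \<le> s" "s < t" "t < pi/2" "p \<bullet> uu t \<le> supp K t - 1"
  shows "p \<bullet> uu s \<le> supp K s"
proof (rule inner_le_supp_from_deficit[OF compact nonempty])
  show "cos t *\<^sub>R uu s = cos s *\<^sub>R uu t - sin (t - s) *\<^sub>R uu (pi/2)"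
    using sin_diff_uu_cycle[of t "pi/2" s] by (simp add: sin_diff algebra_simps)
  show "0 < cos t" "0 \<le> sin (t - s)"
    using assms by (auto intro!: cos_gt_zero_pi sin_ge_zero)
  have "sin (t - s) \<le> sin (pi/2 - s)"
    using assms by (intro sin_monotone_2pi_le) auto
  then show "sin (t - s) \<le> cos s"
    by (simp add: sin_diff)
  show "\<forall>k\<in>K. k \<bullet> uu (pi/2) \<le> 1" "0 \<le> p \<bullet> uu (pi/2)"
    using inner_uu_pi2_bounds assms(1) by (auto simp: mem_fan_iff inner_uu)
qed (fact assms(5))

lemma inner_le_supp_after_window:
  assumes "p \<in> fan \<omega>" "0 \<le> t" "\<omega> - t < pi/2" "t + pi/2 < s" "s \<le> \<omega> + pi/2"
    and "p \<bullet> vv t \<le> supp K (t + pi/2) - 1"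
  shows "p \<bullet> uu s \<le> supp K s"
proof (rule inner_le_supp_from_deficit[OF compact nonempty])
  show "sin (t + pi/2 - \<omega>) *\<^sub>R uu s = sin (s - \<omega>) *\<^sub>R uu (t + pi/2) - sin (s - (t + pi/2)) *\<^sub>R uu \<omega>"
    using sin_diff_uu_cycle[of "t + pi/2" \<omega> s] sin_minus[of "s - \<omega>"]
    by (simp add: algebra_simps)
  show "0 < sin (t + pi/2 - \<omega>)" "0 \<le> sin (s - (t + pi/2))"
    using assms omega_le by (auto intro!: sin_gt_zero sin_ge_zero)
  show "sin (s - (t + pi/2)) \<le> sin (s - \<omega>)"
    using assms omega_le by (intro sin_monotone_2pi_le) auto
  show "\<forall>k\<in>K. k \<bullet> uu \<omega> \<le> 1" "0 \<le> p \<bullet> uu \<omega>"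
    using inner_uu_omega_bounds assms(1) by (auto simp: mem_fan_iff)
qed (use assms(6) in \<open>simp add: vv_eq_uu\<close>)

lemma inner_le_supp_outside_window:
  assumes "p \<in> fan \<omega>" "0 \<le> t" "t < pi/2" "\<omega> - t < pi/2"
    and "p \<bullet> uu t \<le> supp K t - 1" "p \<bullet> vv t \<le> supp K (t + pi/2) - 1"
    and "s \<in> cap_directions \<omega>" "\<not> (t \<le> s \<and> s \<le> t + pi/2)"
  shows "p \<bullet> uu s \<le> supp K s"
proof -
  have "p \<bullet> uu (3*pi/2) \<le> supp K (3*pi/2)" "p \<bullet> uu (pi + \<omega>) \<le> supp K (pi + \<omega>)"
    using assms(1) by (simp_all add: supp_3pi2 supp_pi_omega uu_3pi2 uu_pi_add mem_fan_iff inner_uu)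
  moreover have "p \<bullet> uu s \<le> supp K s" if "s \<in> Jset \<omega>"
  proof -
    have "0 \<le> s" "s \<le> \<omega> + pi/2"
      using that omega_pos omega_le by (auto simp: Jset_def)
    then show ?thesis
      using assms inner_le_supp_before_window inner_le_supp_after_window by (meson not_le)
  qed
  ultimately show ?thesis
    using assms(7) unfolding cap_directions_def by blast
qed

lemma mem_iff_window:
  assumes "p \<in> fan \<omega>" "0 \<le> t" "t < pi/2" "\<omega> - t < pi/2"
    and "p \<bullet> uu t \<le> supp K t - 1" "p \<bullet> vv t \<le> supp K (t + pi/2) - 1"
  shows "p \<in> K \<longleftrightarrow> (\<forall>s\<in>cap_directions \<omega>. t \<le> s \<longrightarrow> s \<le> t + pi/2 \<longrightarrow> p \<bullet> uu s \<le> supp K s)"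
  using inner_le_supp_outside_window[OF assms] eq_Inter_supporting_halfplanes by blast

lemma window_if_xK_in_interior_fan:
  assumes "xK K t \<in> interior (fan \<omega>)" "0 \<le> t" "t \<le> \<omega>"
  shows "t < pi/2" "\<omega> - t < pi/2"
proof -
  have pos: "0 < xK K t \<bullet> uu (pi/2)"
    using assms(1) by (simp add: interior_fan inner_uu)
  show "t < pi/2"
  proof (rule ccontr)
    assume "\<not> t < pi/2"
    then have "t = pi/2"
      using assms omega_le by simp
    then have "0 < xK K (pi/2) \<bullet> uu (pi/2)"
      using pos by (simp only:)
    then show False
      using inner_xK_uu[of K "pi/2"] supp_pi2 by simp
  qed
  show "\<omega> - t < pi/2"
  proof (rule ccontr)
    assume "\<not> \<omega> - t < pi/2"
    then have "t = 0" "\<omega> = pi/2"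
      using assms omega_le by auto
    then show False
      using pos inner_xK_vv[of K t] supp_pi2 by (simp add: vv_eq_uu)
  qed
qed

lemma niche_subset_if_corners:
  assumes corners: "\<forall>t\<in>{0..\<omega>}. xK K t \<notin> interior (fan \<omega>) \<or> xK K t \<in> K"
  shows "niche \<omega> K \<subseteq> K"
proof
  fix p
  assume "p \<in> niche \<omega> K"
  then obtain t where t: "0 \<le> t" "t \<le> \<omega>" and p: "p \<in> fan \<omega>" "p \<in> Qminus K t"
    by (auto simp: niche_def)
  have x_int: "xK K t \<in> interior (fan \<omega>)"
    using xK_in_interior_fan[OF p t omega_le] .
  then have x_in: "xK K t \<in> K"
    using corners t by auto
  have "p \<bullet> uu s \<le> supp K s" if "t \<le> s" "s \<le> t + pi/2" for s
  proof -
    have "p \<bullet> uu s \<le> xK K t \<bullet> uu s"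
      using inner_uu_nonneg_between[of "xK K t - p" t s] p(2) that
      by (auto simp: mem_Qminus_iff inner_diff_left)
    also have "\<dots> \<le> supp K s"
      by (rule inner_le_supp[OF compact x_in])
    finally show ?thesis .
  qed
  moreover have "p \<bullet> uu t \<le> supp K t - 1" "p \<bullet> vv t \<le> supp K (t + pi/2) - 1"
    using p(2) by (auto simp: Qminus_def)
  ultimately show "p \<in> K"
    using mem_iff_window[OF p(1) t(1) window_if_xK_in_interior_fan[OF x_int t]] by blast
qed

lemma supp_minus_one_le_at_maximizer_0:
  assumes "k \<in> K" "k \<bullet> uu 0 = supp K 0" "0 \<le> t" "t \<le> pi/2"
  shows "supp K t - 1 \<le> k \<bullet> uu t"
proof (rule supp_minus_one_le_at_maximizer[OF compact nonempty assms(1,2)])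
  show "uu t = cos t *\<^sub>R uu 0 + sin t *\<^sub>R uu (pi/2)"
    using uu_rotate[of t 0] by (simp add: vv_eq_uu)
  show "0 \<le> cos t" "0 \<le> sin t" "sin t \<le> 1"
    using assms by (auto intro!: cos_ge_zero sin_ge_zero)
qed (use inner_uu_pi2_bounds in blast)

lemma supp_minus_one_le_at_maximizer_omega:
  assumes "k \<in> K" "k \<bullet> uu (\<omega> + pi/2) = supp K (\<omega> + pi/2)" "0 \<le> t" "t \<le> \<omega>"
  shows "supp K (t + pi/2) - 1 \<le> k \<bullet> vv t"
  unfolding vv_eq_uu
proof (rule supp_minus_one_le_at_maximizer[OF compact nonempty assms(1,2)])
  show "uu (t + pi/2) = cos (\<omega> - t) *\<^sub>R uu (\<omega> + pi/2) + sin (\<omega> - t) *\<^sub>R uu \<omega>"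
    using uu_rotate[of "t + pi/2" \<omega>] by (simp add: vv_eq_uu cos_add sin_add cos_diff sin_diff algebra_simps)
  show "0 \<le> cos (\<omega> - t)" "0 \<le> sin (\<omega> - t)" "sin (\<omega> - t) \<le> 1"
    using assms omega_le by (auto intro!: cos_ge_zero sin_ge_zero)
qed (use inner_uu_omega_bounds in blast)

lemma not_mem_niche_iff: "p \<in> K \<Longrightarrow> p \<notin> niche \<omega> K \<longleftrightarrow> (\<forall>t\<in>{0..\<omega>}. p \<notin> Qminus K t)"
  using subset_fan by (auto simp: niche_def)

lemma closed_diff_niche: "closed (K - niche \<omega> K)"
proof -
  have "K - niche \<omega> K = K - (\<Union>t\<in>{0..\<omega>}. Qminus K t)"
    using not_mem_niche_iff by blast
  then show ?thesis
    using compact by (simp add: closed_Diff compact_imp_closed open_UN open_Qminus)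
qed

lemma highest_point_not_in_niche:
  assumes "niche \<omega> K \<subseteq> K" "p \<in> K"
  obtains q where "q \<in> K - niche \<omega> K" "fst q = fst p" "snd p \<le> snd q"
proof -
  define L where "L = K \<inter> {z. fst z = fst p}"
  have "compact L"
    unfolding L_def using compact
    by (intro compact_Int_closed closed_Collect_eq continuous_intros)
  then have "compact (snd ` L)"
    by (intro compact_continuous_image continuous_intros)
  moreover have "snd ` L \<noteq> {}"
    using assms(2) by (auto simp: L_def)
  ultimately obtain m where "m \<in> snd ` L" "\<forall>y\<in>snd ` L. y \<le> m"
    using compact_attains_sup by blast
  then obtain q where q: "q \<in> L" "\<forall>z\<in>L. snd z \<le> snd q"
    by fastforce
  have "q \<notin> niche \<omega> K"
  proof
    assume "q \<in> niche \<omega> K"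
    moreover have "0 \<le> \<omega>" "0 \<le> pi/2" "pi/2 \<le> \<omega> + pi/2"
      using omega_pos by auto
    ultimately obtain \<epsilon> where "0 < \<epsilon>" "q + \<epsilon> *\<^sub>R uu (pi/2) \<in> niche \<omega> K"
      using omega_le niche_add_uu by metis
    then have "q + \<epsilon> *\<^sub>R uu (pi/2) \<in> L"
      using q(1) assms(1) by (auto simp: L_def uu_pi2)
    then have "snd (q + \<epsilon> *\<^sub>R uu (pi/2)) \<le> snd q"
      using q(2) by blast
    with \<open>0 < \<epsilon>\<close> show False
      by (simp add: uu_pi2)
  qed
  with q(1) have "q \<in> K - niche \<omega> K" "fst q = fst p" "snd p \<le> snd q"
    using q(2) assms(2) by (auto simp: L_def)
  then show ?thesis
    by (rule that)
qed

lemma connected_diff_niche: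
  assumes "niche \<omega> K \<subseteq> K"
  shows "connected (K - niche \<omega> K)"
proof (rule connected_if_upward_closed[OF compact convex closed_diff_niche Diff_subset])
  show "\<exists>q\<in>K - niche \<omega> K. fst q = fst p \<and> snd p \<le> snd q" if "p \<in> K" for p
    using highest_point_not_in_niche[OF assms that] by metis
next
  fix q p
  assume q: "q \<in> K - niche \<omega> K" and p: "p \<in> K" "fst p = fst q" "snd q \<le> snd p"
  have p_eq: "p = q + (snd p - snd q) *\<^sub>R uu (pi/2)"
    using p(2) by (simp add: uu_pi2 prod_eq_iff)
  have "p \<notin> Qminus K t" if t: "t \<in> {0..\<omega>}" for t
  proof
    assume "p \<in> Qminus K t"
    then have "q \<in> Qminus K t"
      using t omega_le p(3) by (intro Qminus_shift_down[of q "snd p - snd q" "pi/2"]) (auto simp flip: p_eq)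
    then show False
      using q t not_mem_niche_iff by blast
  qed
  then show "p \<in> K - niche \<omega> K"
    using p(1) not_mem_niche_iff by blast
qed

lemma maximizer_0_not_in_niche:
  assumes "k \<in> K" "k \<bullet> uu 0 = supp K 0"
  shows "k \<notin> niche \<omega> K"
proof -
  have "k \<notin> Qminus K t" if "t \<in> {0..\<omega>}" for t
    using supp_minus_one_le_at_maximizer_0[OF assms, of t] that omega_le by (auto simp: Qminus_def)
  then show ?thesis
    using not_mem_niche_iff[OF assms(1)] by blast
qed

lemma maximizer_omega_not_in_niche:
  assumes "k \<in> K" "k \<bullet> uu (\<omega> + pi/2) = supp K (\<omega> + pi/2)"
  shows "k \<notin> niche \<omega> K"
proof -
  have "k \<notin> Qminus K t" if "t \<in> {0..\<omega>}" for t
    using supp_minus_one_le_at_maximizer_omega[OF assms, of t] that by (auto simp: Qminus_def)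
  then show ?thesis
    using not_mem_niche_iff[OF assms(1)] by blast
qed

lemma diff_niche_subset_corner_halfplanes:
  assumes "0 \<le> t" "t \<le> \<omega>"
  shows "K - niche \<omega> K \<subseteq> {p. xK K t \<bullet> uu t \<le> p \<bullet> uu t} \<union> {p. xK K t \<bullet> vv t \<le> p \<bullet> vv t}"
proof
  fix p
  assume "p \<in> K - niche \<omega> K"
  then have "p \<notin> Qminus K t"
    using not_mem_niche_iff[of p] assms by fastforce
  then show "p \<in> {p. xK K t \<bullet> uu t \<le> p \<bullet> uu t} \<union> {p. xK K t \<bullet> vv t \<le> p \<bullet> vv t}"
    by (auto simp: Qminus_def inner_xK_uu inner_xK_vv)
qed

lemma no_point_dominates_outside_corner:
  assumes x_int: "xK K t \<in> interior (fan \<omega>)" and x_out: "xK K t \<notin> K"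
    and t: "0 \<le> t" "t \<le> \<omega>" and "p \<in> K"
  shows "p \<bullet> uu t < xK K t \<bullet> uu t \<or> p \<bullet> vv t < xK K t \<bullet> vv t"
proof (rule ccontr)
  assume "\<not> ?thesis"
  then have "0 \<le> (p - xK K t) \<bullet> uu t" "0 \<le> (p - xK K t) \<bullet> vv t"
    by (simp_all add: inner_diff_left)
  have "xK K t \<in> fan \<omega>"
    using x_int interior_subset by blast
  moreover have "xK K t \<bullet> uu t \<le> supp K t - 1" "xK K t \<bullet> vv t \<le> supp K (t + pi/2) - 1"
    by (simp_all add: inner_xK_uu inner_xK_vv)
  ultimately obtain s where s: "t \<le> s" "s \<le> t + pi/2" "supp K s < xK K t \<bullet> uu s"
    using mem_iff_window[OF _ t(1) window_if_xK_in_interior_fan[OF x_int t]] x_out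
    by (auto simp: not_le)
  have "0 \<le> (p - xK K t) \<bullet> uu s"
    using inner_uu_nonneg_between \<open>0 \<le> (p - xK K t) \<bullet> uu t\<close> \<open>0 \<le> (p - xK K t) \<bullet> vv t\<close> s(1,2)
    by blast
  then show False
    using inner_le_supp[OF compact \<open>p \<in> K\<close>, of s] s(3) by (simp add: inner_diff_left)
qed

lemma corners_if_connected:
  assumes "connected (K - niche \<omega> K)"
  shows "\<forall>t\<in>{0..\<omega>}. xK K t \<notin> interior (fan \<omega>) \<or> xK K t \<in> K"
proof (rule ccontr)
  assume "\<not> ?thesis"
  then obtain t where t: "0 \<le> t" "t \<le> \<omega>"
    and x_int: "xK K t \<in> interior (fan \<omega>)" and x_out: "xK K t \<notin> K"
    by auto
  define A1 where "A1 = {p. xK K t \<bullet> uu t \<le> p \<bullet> uu t}"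
  define A2 where "A2 = {p. xK K t \<bullet> vv t \<le> p \<bullet> vv t}"
  have "closed A1" "closed A2"
    unfolding A1_def A2_def by (intro closed_Collect_le continuous_intros)+
  moreover have "K - niche \<omega> K \<subseteq> A1 \<union> A2"
    unfolding A1_def A2_def using diff_niche_subset_corner_halfplanes[OF t] .
  moreover have "A1 \<inter> A2 \<inter> (K - niche \<omega> K) = {}"
  proof -
    have "p \<notin> A1 \<inter> A2" if "p \<in> K" for p
      using no_point_dominates_outside_corner[OF x_int x_out t that] by (auto simp: A1_def A2_def)
    then show ?thesis
      by blast
  qed
  moreover have "A1 \<inter> (K - niche \<omega> K) \<noteq> {}"
  proof -
    obtain q where q: "q \<in> K" "q \<bullet> uu 0 = supp K 0"
      using supp_attained[OF compact nonempty] by blast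
    then have "q \<in> A1"
      using supp_minus_one_le_at_maximizer_0[OF q, of t] t omega_le by (simp add: A1_def inner_xK_uu)
    then show ?thesis
      using q maximizer_0_not_in_niche by blast
  qed
  moreover have "A2 \<inter> (K - niche \<omega> K) \<noteq> {}"
  proof -
    obtain r where r: "r \<in> K" "r \<bullet> uu (\<omega> + pi/2) = supp K (\<omega> + pi/2)"
      using supp_attained[OF compact nonempty] by blast
    then have "r \<in> A2"
      using supp_minus_one_le_at_maximizer_omega[OF r, of t] t by (simp add: A2_def inner_xK_vv)
    then show ?thesis
      using r maximizer_omega_not_in_niche by blast
  qed
  ultimately show False
    using assms[unfolded connected_closed] by (metis (no_types, lifting))
qed

end

theorem theorem3p24:
  fixes \<omega> :: real and K :: "(real \<times> real) set"
  assumes "0 < \<omega>" and "\<omega> \<le> pi/2" and "is_cap \<omega> K"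
  shows "(niche \<omega> K \<subseteq> K \<longleftrightarrow> niche \<omega> K \<subseteq> K - upper_boundary \<omega> K) \<and>
         (niche \<omega> K \<subseteq> K \<longleftrightarrow>
            (\<forall>t\<in>{0..\<omega>}. xK K t \<notin> interior (fan \<omega>) \<or> xK K t \<in> K)) \<and>
         (niche \<omega> K \<subseteq> K \<longleftrightarrow> connected (K - niche \<omega> K))"
proof -
  interpret cap \<omega> K
    using assms by unfold_locales
  have "niche \<omega> K \<subseteq> K \<longleftrightarrow> niche \<omega> K \<subseteq> K - upper_boundary \<omega> K"
    using niche_disjoint_upper_boundary[OF compact _ less_imp_le[OF omega_pos] omega_le] by blast
  moreover have "niche \<omega> K \<subseteq> K \<longleftrightarrow> (\<forall>t\<in>{0..\<omega>}. xK K t \<notin> interior (fan \<omega>) \<or> xK K t \<in> K)"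
    using corners_if_niche_subset[OF compact_imp_closed[OF compact]] niche_subset_if_corners by blast
  moreover have "niche \<omega> K \<subseteq> K \<longleftrightarrow> connected (K - niche \<omega> K)"
    using connected_diff_niche corners_if_connected niche_subset_if_corners by blast
  ultimately show ?thesis
    by blast
qed

end
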